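(* Let $\chi$ be a kernel satisfying $(\chi_1)$ and $(\chi_2)$ with $\eta>0$. Let $f:\mathbb{R}_+\to\mathbb{R}_+$ be bounded. Then $\lim_{w\to\infty}MG^{\chi}_w(f,x)=f(x)$ at every point $x\in\mathbb{R}_+$ at which $f$ is log-continuous. Moreover, if $f\in\mathcal{UB}^{\bar\omega}_+(\mathbb{R}_+)$, then $\lim_{w\to\infty}\|MG^{\chi}_w f-f\|_{\bar\omega}=0$.
   Context: $\mathbb{R}_+$ denotes the positive reals; $\bigvee_{k\in\Lambda}T_k=\sup\{T_k:k\in\Lambda\}$. A kernel is a bounded measurable $\chi:\mathbb{R}_+\to\mathbb{R}$. Moments: $m_{\nu}(\chi)=\sup_{u>0}\bigvee_{k\in\mathbb{Z}}|\chi(e^{-k}u)||k-\log u|^{\nu}$. Condition $(\chi_1)$: $m_2(\chi)<\infty$. Condition $(\chi_2)$: $\eta:=\inf_{x\in[1,e]}\chi(x)$ exists. Weight $\bar\omega(x)=\frac1{1+\log^2x}$, $\|f\|_{\bar\omega}=\sup_{x>0}\bar\omega(x)|f(x)|$. A function $g:\mathbb{R}_+\to\mathbb{R}$ is log-uniformly continuous if for every $\epsilon>0$ there is $\delta>0$ with $|g(x)-g(y)|<\epsilon$ whenever $|\log x-\log y|\le\delta$; $f$ is log-continuous at $x$ if for every $\epsilon>0$ there is $\delta>0$ with $|f(y)-f(x)|<\epsilon$ whenever $|\log y-\log x|\le \delta$. $\mathcal{UB}^{\bar\omega}_+(\mathbb{R}_+)$ is the set of nonnegative $f:\mathbb{R}_+\to\mathbb{R}$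 such that $\bar\omega f$ is bounded and log-uniformly continuous. Operator: $MG^{\chi}_w(f,x)=\frac{\bigvee_{k\in\mathbb{Z}}\chi(e^{-k}x^{w})f(e^{k/w})}{\bigvee_{k\in\mathbb{Z}}\chi(e^{-k}x^{w})}$. *)

theory Defs
  imports "HOL-Analysis.Analysis"
begin

definition is_kernel :: "(real \<Rightarrow> real) \<Rightarrow> bool" where
  "is_kernel K \<longleftrightarrow> (\<exists>B. \<forall>x>0. \<bar>K x\<bar> \<le> B) \<and> set_borel_measurable borel {0<..} K"

definition moment_finite :: "real \<Rightarrow> (real \<Rightarrow> real) \<Rightarrow> bool" where
  "moment_finite \<nu> K \<longleftrightarrow>
     (\<exists>M. \<forall>u>0. \<forall>k::int. \<bar>K (exp (- real_of_int k) * u)\<bar> * \<bar>real_of_int k - ln u\<bar> powr \<nu> \<le> M)"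

definition kernel_eta :: "(real \<Rightarrow> real) \<Rightarrow> real" where
  "kernel_eta K = Inf (K ` {1..exp 1})"

definition omega_bar :: "real \<Rightarrow> real" where
  "omega_bar x = 1 / (1 + (ln x)\<^sup>2)"

definition omega_norm :: "(real \<Rightarrow> real) \<Rightarrow> real" where
  "omega_norm f = (SUP x\<in>{0<..}. omega_bar x * \<bar>f x\<bar>)"

definition log_uniformly_continuous :: "(real \<Rightarrow> real) \<Rightarrow> bool" where
  "log_uniformly_continuous g \<longleftrightarrow>
     (\<forall>\<epsilon>>0. \<exists>\<delta>>0. \<forall>x>0. \<forall>y>0. \<bar>ln x - ln y\<bar> \<le> \<delta> \<longrightarrow> \<bar>g x - g y\<bar> < \<epsilon>)"

definition log_continuous_at :: "(real \<Rightarrow> real) \<Rightarrow> real \<Rightarrow> bool" where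
  "log_continuous_at f x \<longleftrightarrow>
     (\<forall>\<epsilon>>0. \<exists>\<delta>>0. \<forall>y>0. \<bar>ln y - ln x\<bar> \<le> \<delta> \<longrightarrow> \<bar>f y - f x\<bar> < \<epsilon>)"

definition UB_omega_plus :: "(real \<Rightarrow> real) set" where
  "UB_omega_plus = {f. (\<forall>x>0. f x \<ge> 0) \<and> (\<exists>B. \<forall>x>0. \<bar>omega_bar x * f x\<bar> \<le> B)
       \<and> log_uniformly_continuous (\<lambda>x. omega_bar x * f x)}"

definition MG :: "(real \<Rightarrow> real) \<Rightarrow> real \<Rightarrow> (real \<Rightarrow> real) \<Rightarrow> real \<Rightarrow> real" where
  "MG K w f x =
     (SUP k::int. K (exp (- real_of_int k) * x powr w) * f (exp (real_of_int k / w)))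
     / (SUP k::int. K (exp (- real_of_int k) * x powr w))"

end

theory Submission
  imports Defs
begin

text \<open>Write \<open>a\<^sub>k = \<chi>(e\<^sup>-\<^sup>k x\<^sup>w)\<close>. The \<open>a\<^sub>k\<close> are bounded and \<open>a\<^sub>k \<ge> \<eta> > 0\<close> for \<open>k = \<lfloor>w log x\<rfloor>\<close>,
  so bounds \<open>|a\<^sub>k| |f(e\<^sup>k\<^sup>/\<^sup>w) - f(x)| \<le> E\<close> for all \<open>k\<close> give \<open>|MG\<^sub>w f(x) - f(x)| \<le> E / \<eta>\<close>.
  For \<open>|k/w - log x| \<le> \<delta>\<close> such a bound comes from the (log-)continuity of \<open>f\<close>; for the
  other \<open>k\<close> the second moment gives \<open>|a\<^sub>k| (1 + (k/w - log x)\<^sup>2) = O(w\<^sup>-\<^sup>2)\<close>, which absorbs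
  the deviation of \<open>f\<close>: bounded in the first part, and at most quadratic in \<open>k/w - log x\<close>
  relative to the weight \<open>\<omega>(x)\<close> in the second.\<close>

lemma SUP_ratio_approx:
  fixes a g :: "int \<Rightarrow> real"
  assumes a_bounded: "\<And>k. \<bar>a k\<bar> \<le> B" and a_k0: "\<eta> \<le> a k0" and "\<eta> > 0" and "c \<ge> 0"
    and deviation: "\<And>k. \<bar>a k\<bar> * \<bar>g k - c\<bar> \<le> E"
  shows "\<bar>(SUP k. a k * g k) / (SUP k. a k) - c\<bar> \<le> E / \<eta>"
proof -
  define D where "D = (SUP k. a k)"
  define N where "N = (SUP k. a k * g k)"
  have dev: "\<bar>a k * g k - c * a k\<bar> \<le> E" for k
    using deviation[of k] by (simp add: abs_mult[symmetric] algebra_simps)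
  have upper: "a k * g k \<le> c * a k + E" and lower: "c * a k \<le> a k * g k + E" for k
    using dev[of k] by (simp_all add: abs_le_iff)
  have "bdd_above (range a)"
    using a_bounded by (intro bdd_aboveI[of _ B]) (auto simp: abs_le_iff)
  then have a_le_D: "a k \<le> D" for k
    unfolding D_def by (rule cSUP_upper[OF UNIV_I])
  have "\<eta> \<le> D" using a_le_D[of k0] a_k0 by simp
  then have "D > 0" using \<open>\<eta> > 0\<close> by simp
  have "c * a k \<le> c * D" for k using a_le_D[of k] \<open>c \<ge> 0\<close> by (rule mult_left_mono)
  then have ag_le: "a k * g k \<le> c * D + E" for k using upper[of k] by (meson add_right_mono order_trans)
  then have "bdd_above (range (\<lambda>k. a k * g k))" by (intro bdd_aboveI) auto
  then have ag_le_N: "a k * g k \<le> N" for k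
    unfolding N_def by (rule cSUP_upper[OF UNIV_I])
  have N_le: "N \<le> c * D + E"
    unfolding N_def using ag_le by (intro cSUP_least) auto
  have le_N: "c * D \<le> N + E"
  proof (cases "c = 0")
    case True
    then show ?thesis using lower[of k0] ag_le_N[of k0] by simp
  next
    case False
    then have "c > 0" using \<open>c \<ge> 0\<close> by simp
    have "a k \<le> (N + E) / c" for k
      using lower[of k] ag_le_N[of k] \<open>c > 0\<close> by (simp add: field_simps)
    then have "D \<le> (N + E) / c" unfolding D_def by (intro cSUP_least) auto
    then show ?thesis using \<open>c > 0\<close> by (simp add: field_simps)
  qed
  have "E \<ge> 0" using deviation[of k0] by (meson abs_ge_zero mult_nonneg_nonneg order_trans)
  have "\<bar>N / D - c\<bar> = \<bar>N - c * D\<bar> / D" using \<open>D > 0\<close> by (simp add: field_simps)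
  also have "\<dots> \<le> E / D" using N_le le_N \<open>D > 0\<close> by (intro divide_right_mono) auto
  also have "\<dots> \<le> E / \<eta>" using \<open>E \<ge> 0\<close> \<open>\<eta> \<le> D\<close> \<open>\<eta> > 0\<close> by (intro divide_left_mono) auto
  finally show ?thesis unfolding N_def D_def .
qed

lemma tendsto_at_top_if_eventually_le_plus_inverse_square:
  fixes F :: "real \<Rightarrow> real"
  assumes "\<And>e. e > 0 \<Longrightarrow> \<exists>C. \<forall>\<^sub>F w in at_top. dist (F w) L \<le> e + C / w\<^sup>2"
  shows "(F \<longlongrightarrow> L) at_top"
proof (rule tendstoI)
  fix \<epsilon> :: real
  assume "\<epsilon> > 0"
  then obtain C where bound: "\<forall>\<^sub>F w in at_top. dist (F w) L \<le> \<epsilon> / 2 + C / w\<^sup>2"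
    using assms[of "\<epsilon> / 2"] by auto
  have "((\<lambda>w::real. C / w\<^sup>2) \<longlongrightarrow> 0) at_top"
    by (intro tendsto_divide_0[OF tendsto_const] filterlim_at_top_imp_at_infinity
        filterlim_pow_at_top filterlim_ident) simp
  then have "\<forall>\<^sub>F w in at_top. C / w\<^sup>2 < \<epsilon> / 2"
    by (rule order_tendstoD) (use \<open>\<epsilon> > 0\<close> in simp)
  with bound show "\<forall>\<^sub>F w in at_top. dist (F w) L < \<epsilon>"
    by eventually_elim linarith
qed

lemma omega_bar_pos: "omega_bar x > 0"
  unfolding omega_bar_def by (simp add: add_pos_nonneg)

lemma omega_norm_le:
  assumes "\<And>x. x > 0 \<Longrightarrow> omega_bar x * \<bar>g x\<bar> \<le> R"
  shows "0 \<le> omega_norm g" and "omega_norm g \<le> R"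
proof -
  have bdd: "bdd_above ((\<lambda>x. omega_bar x * \<bar>g x\<bar>) ` {0<..})"
    using assms by (intro bdd_aboveI) auto
  have "0 \<le> omega_bar 1 * \<bar>g 1\<bar>" using omega_bar_pos[of 1] by simp
  also have "\<dots> \<le> omega_norm g"
    unfolding omega_norm_def by (rule cSUP_upper[OF _ bdd]) simp
  finally show "0 \<le> omega_norm g" .
  show "omega_norm g \<le> R"
    unfolding omega_norm_def using assms by (intro cSUP_least) auto
qed

lemma UB_omega_plusE:
  assumes "f \<in> UB_omega_plus"
  obtains H where "\<And>t. t > 0 \<Longrightarrow> 0 \<le> omega_bar t * f t"
    and "\<And>t. t > 0 \<Longrightarrow> omega_bar t * f t \<le> H"
    and "log_uniformly_continuous (\<lambda>x. omega_bar x * f x)"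
proof -
  obtain H where H: "\<And>t. t > 0 \<Longrightarrow> \<bar>omega_bar t * f t\<bar> \<le> H"
    and f_nonneg: "\<And>t. t > 0 \<Longrightarrow> 0 \<le> f t"
    and uc: "log_uniformly_continuous (\<lambda>x. omega_bar x * f x)"
    using assms unfolding UB_omega_plus_def by blast
  show ?thesis
  proof (rule that[of H])
    show "0 \<le> omega_bar t * f t" if "t > 0" for t
      using f_nonneg[OF that] omega_bar_pos[of t] by simp
    show "omega_bar t * f t \<le> H" if "t > 0" for t
      using H[OF that] by simp
  qed (fact uc)
qed

lemma two_abs_le_one_plus_square: "2 * \<bar>z\<bar> \<le> 1 + (z::real)\<^sup>2"
  using zero_le_power2[of "\<bar>z\<bar> - 1"] by (simp add: power2_eq_square algebra_simps)

text \<open>With \<open>h = \<omega> f\<close>, the weight changes from \<open>\<omega> t\<close> to \<open>\<omega> x\<close> at relative cost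
  \<open>(1 + (z + d)\<^sup>2)/(1 + z\<^sup>2) - 1\<close>, \<open>z = log x\<close>, \<open>d = log t - log x\<close>, which is at most
  \<open>|d| + d\<^sup>2\<close> because \<open>2|z| \<le> 1 + z\<^sup>2\<close>.\<close>

lemma omega_bar_weighted_deviation:
  fixes f :: "real \<Rightarrow> real"
  assumes "0 \<le> omega_bar t * f t" and "omega_bar t * f t \<le> H"
  shows "omega_bar x * \<bar>f t - f x\<bar>
    \<le> \<bar>omega_bar t * f t - omega_bar x * f x\<bar> + H * (\<bar>ln t - ln x\<bar> + (ln t - ln x)\<^sup>2)"
proof -
  define z d ht where "z = ln x" and "d = ln t - ln x" and "ht = omega_bar t * f t"
  define q where "q = (2 * z * d + d\<^sup>2) / (1 + z\<^sup>2)"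
  have pos: "1 + z\<^sup>2 > 0" by (simp add: add_pos_nonneg)
  have "omega_bar x * f t = ht * (1 + (z + d)\<^sup>2) / (1 + z\<^sup>2)"
    using add_pos_nonneg[of 1 "(ln t)\<^sup>2"] by (simp add: ht_def z_def d_def omega_bar_def)
  also have "\<dots> = ht + ht * q"
    using pos by (simp add: q_def field_simps power2_eq_square)
  finally have split: "omega_bar x * (f t - f x) = (ht - omega_bar x * f x) + ht * q"
    by (simp add: right_diff_distrib)
  have "2 * \<bar>z\<bar> * \<bar>d\<bar> \<le> (1 + z\<^sup>2) * \<bar>d\<bar>"
    using two_abs_le_one_plus_square[of z] by (intro mult_right_mono) auto
  moreover have "d\<^sup>2 \<le> (1 + z\<^sup>2) * d\<^sup>2"
    by (simp add: distrib_right)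
  moreover have "\<bar>2 * z * d + d\<^sup>2\<bar> \<le> 2 * \<bar>z\<bar> * \<bar>d\<bar> + d\<^sup>2"
    using abs_triangle_ineq[of "2 * z * d" "d\<^sup>2"] by (simp add: abs_mult)
  ultimately have "\<bar>2 * z * d + d\<^sup>2\<bar> \<le> (1 + z\<^sup>2) * (\<bar>d\<bar> + d\<^sup>2)"
    by (simp add: distrib_left)
  then have "\<bar>q\<bar> \<le> \<bar>d\<bar> + d\<^sup>2"
    using pos by (simp add: q_def abs_divide pos_divide_le_eq mult_ac)
  then have "\<bar>ht * q\<bar> \<le> H * (\<bar>d\<bar> + d\<^sup>2)"
    using assms by (auto simp: ht_def abs_mult intro: mult_mono)
  moreover have "omega_bar x * \<bar>f t - f x\<bar> = \<bar>omega_bar x * (f t - f x)\<bar>"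
    using omega_bar_pos[of x] by (simp add: abs_mult)
  ultimately show ?thesis
    unfolding split d_def[symmetric] ht_def[symmetric] by linarith
qed

locale max_product_kernel =
  fixes K :: "real \<Rightarrow> real" and B M \<eta> :: real
  assumes kernel_bounded: "\<And>y. y > 0 \<Longrightarrow> \<bar>K y\<bar> \<le> B"
    and kernel_moment: "\<And>u k. u > 0 \<Longrightarrow> \<bar>K (exp (- real_of_int k) * u)\<bar> * (real_of_int k - ln u)\<^sup>2 \<le> M"
    and kernel_lower: "\<And>y. y \<in> {1..exp 1} \<Longrightarrow> \<eta> \<le> K y"
    and eta_pos: "\<eta> > 0"
begin

lemma bound_nonneg: "B \<ge> 0"
  using kernel_bounded[of 1] by simp

lemma moment_bound_nonneg: "M \<ge> 0"
  using kernel_moment[of 1 0] by (smt (verit) abs_ge_zero mult_nonneg_nonneg zero_le_power2)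

lemma kernel_lower_at_some_index:
  assumes "x > 0"
  obtains k0 :: int where "\<eta> \<le> K (exp (- real_of_int k0) * x powr w)"
proof -
  define L where "L = w * ln x"
  have "exp (- real_of_int \<lfloor>L\<rfloor>) * x powr w = exp (L - real_of_int \<lfloor>L\<rfloor>)"
    using assms by (simp add: powr_def L_def exp_diff field_simps exp_minus)
  moreover have "0 \<le> L - real_of_int \<lfloor>L\<rfloor>" and "L - real_of_int \<lfloor>L\<rfloor> \<le> 1"
    by linarith+
  then have "exp (L - real_of_int \<lfloor>L\<rfloor>) \<in> {1..exp 1}" by auto
  ultimately show ?thesis using that kernel_lower by metis
qed

lemma kernel_moment_scaled:
  assumes "x > 0" "w > 0"
  shows "\<bar>K (exp (- real_of_int k) * x powr w)\<bar> * (real_of_int k / w - ln x)\<^sup>2 \<le> M / w\<^sup>2"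
proof -
  have "real_of_int k - ln (x powr w) = w * (real_of_int k / w - ln x)"
    using assms by (simp add: field_simps)
  then show ?thesis
    using kernel_moment[of "x powr w" k] assms
    by (simp add: power_mult_distrib pos_le_divide_eq mult_ac)
qed

lemma kernel_far_from_diagonal:
  assumes "x > 0" "w > 0" "\<delta> > 0" "\<delta> < \<bar>real_of_int k / w - ln x\<bar>"
  shows "\<bar>K (exp (- real_of_int k) * x powr w)\<bar> \<le> M / (w * \<delta>)\<^sup>2"
proof -
  define a where "a = \<bar>K (exp (- real_of_int k) * x powr w)\<bar>"
  have "\<delta>\<^sup>2 \<le> (real_of_int k / w - ln x)\<^sup>2"
    using assms(3,4) by (simp add: abs_le_square_iff[symmetric])
  then have "a * \<delta>\<^sup>2 \<le> a * (real_of_int k / w - ln x)\<^sup>2"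
    by (intro mult_left_mono) (simp_all add: a_def)
  also have "\<dots> \<le> M / w\<^sup>2"
    unfolding a_def using assms(1,2) by (rule kernel_moment_scaled)
  finally show ?thesis
    using assms(2,3) by (simp add: a_def field_simps power_mult_distrib)
qed

lemma kernel_mult_le_near_far:
  assumes "x > 0" "w > 0" "\<delta> > 0" "r \<ge> 0" "\<epsilon> \<ge> 0" "P \<ge> 0" "Q \<ge> 0"
    and near: "\<bar>real_of_int k / w - ln x\<bar> \<le> \<delta> \<Longrightarrow> r \<le> \<epsilon>"
    and far: "r \<le> P + Q * (real_of_int k / w - ln x)\<^sup>2"
  shows "\<bar>K (exp (- real_of_int k) * x powr w)\<bar> * r \<le> B * \<epsilon> + M * (P / \<delta>\<^sup>2 + Q) / w\<^sup>2"
proof -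
  define a where "a = \<bar>K (exp (- real_of_int k) * x powr w)\<bar>"
  define d where "d = real_of_int k / w - ln x"
  have "a \<le> B" unfolding a_def using assms(1) by (intro kernel_bounded) simp
  have "0 \<le> B * \<epsilon>" and "0 \<le> M * (P / \<delta>\<^sup>2 + Q) / w\<^sup>2"
    using bound_nonneg moment_bound_nonneg assms(5-7) by simp_all
  show ?thesis
  proof (cases "\<bar>d\<bar> \<le> \<delta>")
    case True
    then have "a * r \<le> B * \<epsilon>"
      using near \<open>a \<le> B\<close> bound_nonneg assms(4) by (intro mult_mono) (auto simp: d_def)
    then show ?thesis using \<open>0 \<le> M * (P / \<delta>\<^sup>2 + Q) / w\<^sup>2\<close> unfolding a_def by linarith
  next
    case False
    then have a_far: "a \<le> M / (w * \<delta>)\<^sup>2"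
      unfolding a_def d_def using assms(1-3) by (intro kernel_far_from_diagonal) auto
    have a_moment: "a * d\<^sup>2 \<le> M / w\<^sup>2"
      unfolding a_def d_def using assms(1,2) by (rule kernel_moment_scaled)
    have "a * r \<le> a * (P + Q * d\<^sup>2)"
      using far by (intro mult_left_mono) (auto simp: a_def d_def)
    also have "\<dots> = P * a + Q * (a * d\<^sup>2)"
      by (simp add: algebra_simps)
    also have "\<dots> \<le> P * (M / (w * \<delta>)\<^sup>2) + Q * (M / w\<^sup>2)"
      using a_far a_moment assms(6,7) by (intro add_mono mult_left_mono) auto
    also have "\<dots> = M * (P / \<delta>\<^sup>2 + Q) / w\<^sup>2"
      using assms(2,3) by (simp add: field_simps power_mult_distrib)
    finally show ?thesis using \<open>0 \<le> B * \<epsilon>\<close> unfolding a_def by linarith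
  qed
qed

lemma MG_deviation_bound:
  assumes "x > 0" "w > 0" "\<delta> > 0" "\<rho> > 0" "c \<ge> 0" "P \<ge> 0" "Q \<ge> 0"
    and near: "\<And>t. t > 0 \<Longrightarrow> \<bar>ln t - ln x\<bar> \<le> \<delta> \<Longrightarrow> \<rho> * \<bar>f t - c\<bar> \<le> \<epsilon>"
    and far: "\<And>t. t > 0 \<Longrightarrow> \<rho> * \<bar>f t - c\<bar> \<le> P + Q * (ln t - ln x)\<^sup>2"
  shows "\<rho> * \<bar>MG K w f x - c\<bar> \<le> (B * \<epsilon> + M * (P / \<delta>\<^sup>2 + Q) / w\<^sup>2) / \<eta>"
proof -
  define a where "a k = K (exp (- real_of_int k) * x powr w)" for k
  define g where "g k = f (exp (real_of_int k / w))" for k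
  define E where "E = B * \<epsilon> + M * (P / \<delta>\<^sup>2 + Q) / w\<^sup>2"
  have a_bounded: "\<bar>a k\<bar> \<le> B" for k
    unfolding a_def using assms(1) by (intro kernel_bounded) simp
  have "0 \<le> \<rho> * \<bar>f x - c\<bar>" using \<open>\<rho> > 0\<close> by simp
  then have "\<epsilon> \<ge> 0" using near[of x] assms(1,3) by simp
  have "\<bar>a k\<bar> * (\<rho> * \<bar>g k - c\<bar>) \<le> E" for k
    unfolding a_def g_def E_def using assms(1-4,6,7) \<open>\<epsilon> \<ge> 0\<close>
    by (intro kernel_mult_le_near_far)
      (use near[of "exp (real_of_int k / w)"] far[of "exp (real_of_int k / w)"] in auto)
  then have deviation: "\<bar>a k\<bar> * \<bar>g k - c\<bar> \<le> E / \<rho>" for k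
    using \<open>\<rho> > 0\<close> by (simp add: pos_le_divide_eq mult_ac)
  obtain k0 where "\<eta> \<le> a k0"
    using kernel_lower_at_some_index[OF assms(1)] unfolding a_def by blast
  from SUP_ratio_approx[where a = a and g = g, OF a_bounded this eta_pos assms(5) deviation]
  have "\<bar>MG K w f x - c\<bar> \<le> E / \<rho> / \<eta>" unfolding MG_def a_def g_def .
  then have "\<rho> * \<bar>MG K w f x - c\<bar> \<le> \<rho> * (E / \<rho> / \<eta>)"
    using \<open>\<rho> > 0\<close> by (intro mult_left_mono) auto
  also have "\<dots> = E / \<eta>" using \<open>\<rho> > 0\<close> by simp
  finally show ?thesis unfolding E_def .
qed

lemma MG_tendsto_at_log_continuity_point:
  assumes f_nonneg: "\<And>y. y > 0 \<Longrightarrow> 0 \<le> f y" and f_bounded: "\<And>y. y > 0 \<Longrightarrow> f y \<le> F"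
    and "x > 0" and "log_continuous_at f x"
  shows "((\<lambda>w. MG K w f x) \<longlongrightarrow> f x) at_top"
proof (rule tendsto_at_top_if_eventually_le_plus_inverse_square)
  fix e :: real
  assume "e > 0"
  define \<epsilon> where "\<epsilon> = \<eta> * e / (B + 1)"
  have "\<epsilon> > 0" using \<open>e > 0\<close> eta_pos bound_nonneg by (simp add: \<epsilon>_def)
  then obtain \<delta> where "\<delta> > 0"
    and near_strict: "\<And>t. t > 0 \<Longrightarrow> \<bar>ln t - ln x\<bar> \<le> \<delta> \<Longrightarrow> \<bar>f t - f x\<bar> < \<epsilon>"
    using assms(4) unfolding log_continuous_at_def by blast
  have near: "1 * \<bar>f t - f x\<bar> \<le> \<epsilon>" if "t > 0" "\<bar>ln t - ln x\<bar> \<le> \<delta>" for t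
    using near_strict[OF that] by simp
  have far: "1 * \<bar>f t - f x\<bar> \<le> F + 0 * (ln t - ln x)\<^sup>2" if "t > 0" for t
    using f_nonneg[OF that] f_bounded[OF that] f_nonneg[OF \<open>x > 0\<close>] f_bounded[OF \<open>x > 0\<close>]
    by (simp add: abs_le_iff)
  have "F \<ge> 0" using f_nonneg f_bounded \<open>x > 0\<close> by force
  have "B * \<epsilon> / \<eta> \<le> (B + 1) * \<epsilon> / \<eta>"
    using \<open>\<epsilon> > 0\<close> eta_pos by (simp add: divide_right_mono)
  also have "\<dots> = e"
    using eta_pos bound_nonneg by (simp add: \<epsilon>_def)
  finally have "B * \<epsilon> / \<eta> \<le> e" .
  define C where "C = M * (F / \<delta>\<^sup>2 + 0) / \<eta>"
  have "\<forall>\<^sub>F w in at_top. dist (MG K w f x) (f x) \<le> e + C / w\<^sup>2"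
    using eventually_gt_at_top[of 0]
  proof eventually_elim
    case (elim w)
    have "1 * \<bar>MG K w f x - f x\<bar> \<le> (B * \<epsilon> + M * (F / \<delta>\<^sup>2 + 0) / w\<^sup>2) / \<eta>"
      using f_nonneg \<open>x > 0\<close> \<open>F \<ge> 0\<close>
      by (intro MG_deviation_bound[OF \<open>x > 0\<close> elim \<open>\<delta> > 0\<close> _ _ _ _ near far]) auto
    also have "\<dots> = B * \<epsilon> / \<eta> + C / w\<^sup>2"
      by (simp add: C_def add_divide_distrib)
    finally show ?case using \<open>B * \<epsilon> / \<eta> \<le> e\<close> by (simp add: dist_real_def)
  qed
  then show "\<exists>C. \<forall>\<^sub>F w in at_top. dist (MG K w f x) (f x) \<le> e + C / w\<^sup>2" by blast
qed

lemma MG_omega_weighted_deviation_bound: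
  assumes h_nonneg: "\<And>t. t > 0 \<Longrightarrow> 0 \<le> omega_bar t * f t"
    and h_bounded: "\<And>t. t > 0 \<Longrightarrow> omega_bar t * f t \<le> H"
    and h_near: "\<And>t. t > 0 \<Longrightarrow> \<bar>ln t - ln x\<bar> \<le> \<delta> \<Longrightarrow> \<bar>omega_bar t * f t - omega_bar x * f x\<bar> \<le> \<epsilon>"
    and "x > 0" "w > 0" "\<delta> > 0" "\<delta> \<le> 1" "\<delta> \<le> \<epsilon>"
  shows "omega_bar x * \<bar>MG K w f x - f x\<bar>
    \<le> (B * (\<epsilon> * (1 + 2 * H)) + M * (2 * H / \<delta>\<^sup>2 + 2 * H) / w\<^sup>2) / \<eta>"
proof -
  have "H \<ge> 0" using h_nonneg[of 1] h_bounded[of 1] by simp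
  have "f x \<ge> 0" using h_nonneg[OF \<open>x > 0\<close>] omega_bar_pos[of x] by (simp add: zero_le_mult_iff)
  note deviation = omega_bar_weighted_deviation[where f = f and x = x, OF h_nonneg h_bounded]
  have near: "omega_bar x * \<bar>f t - f x\<bar> \<le> \<epsilon> * (1 + 2 * H)" if "t > 0" "\<bar>ln t - ln x\<bar> \<le> \<delta>" for t
  proof -
    have "(ln t - ln x)\<^sup>2 = \<bar>ln t - ln x\<bar> * \<bar>ln t - ln x\<bar>"
      by (simp add: power2_eq_square)
    also have "\<dots> \<le> \<bar>ln t - ln x\<bar>"
      using that(2) \<open>\<delta> \<le> 1\<close> by (intro mult_left_le) auto
    finally have "(ln t - ln x)\<^sup>2 \<le> \<bar>ln t - ln x\<bar>" .
    then have "H * (\<bar>ln t - ln x\<bar> + (ln t - ln x)\<^sup>2) \<le> H * (2 * \<epsilon>)"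
      using that(2) \<open>\<delta> \<le> \<epsilon>\<close> \<open>H \<ge> 0\<close> by (intro mult_left_mono) auto
    then show ?thesis
      using deviation[OF that(1) that(1)] h_near[OF that] by (simp add: algebra_simps)
  qed
  have far: "omega_bar x * \<bar>f t - f x\<bar> \<le> 2 * H + 2 * H * (ln t - ln x)\<^sup>2" if "t > 0" for t
  proof -
    have "\<bar>ln t - ln x\<bar> \<le> 1 + (ln t - ln x)\<^sup>2"
      by (rule order_trans[OF _ two_abs_le_one_plus_square]) simp
    then have "H * (\<bar>ln t - ln x\<bar> + (ln t - ln x)\<^sup>2) \<le> H * (1 + 2 * (ln t - ln x)\<^sup>2)"
      using \<open>H \<ge> 0\<close> by (intro mult_left_mono) auto
    moreover have "\<bar>omega_bar t * f t - omega_bar x * f x\<bar> \<le> H"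
      using h_nonneg[OF that] h_bounded[OF that] h_nonneg[OF \<open>x > 0\<close>] h_bounded[OF \<open>x > 0\<close>]
      by (simp add: abs_le_iff)
    ultimately show ?thesis
      using deviation[OF that that] by (simp add: algebra_simps)
  qed
  show ?thesis
    using \<open>H \<ge> 0\<close> omega_bar_pos[of x]
    by (intro MG_deviation_bound[OF \<open>x > 0\<close> \<open>w > 0\<close> \<open>\<delta> > 0\<close> _ \<open>f x \<ge> 0\<close> _ _ near far]) auto
qed

lemma MG_omega_norm_tendsto:
  assumes "f \<in> UB_omega_plus"
  shows "((\<lambda>w. omega_norm (\<lambda>x. MG K w f x - f x)) \<longlongrightarrow> 0) at_top"
proof (rule tendsto_at_top_if_eventually_le_plus_inverse_square)
  fix e :: real
  assume "e > 0"
  obtain H where h_nonneg: "\<And>t. t > 0 \<Longrightarrow> 0 \<le> omega_bar t * f t"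
    and h_bounded: "\<And>t. t > 0 \<Longrightarrow> omega_bar t * f t \<le> H"
    and h_uc: "log_uniformly_continuous (\<lambda>x. omega_bar x * f x)"
    using UB_omega_plusE[OF assms] by blast
  have "H \<ge> 0" using h_nonneg[of 1] h_bounded[of 1] by simp
  define \<epsilon> where "\<epsilon> = \<eta> * e / ((B + 1) * (1 + 2 * H))"
  have "\<epsilon> > 0" using \<open>e > 0\<close> eta_pos bound_nonneg \<open>H \<ge> 0\<close> by (simp add: \<epsilon>_def)
  then obtain \<delta>0 where "\<delta>0 > 0" and h_near: "\<And>t x. t > 0 \<Longrightarrow> x > 0 \<Longrightarrow> \<bar>ln t - ln x\<bar> \<le> \<delta>0
      \<Longrightarrow> \<bar>omega_bar t * f t - omega_bar x * f x\<bar> \<le> \<epsilon>"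
    using h_uc unfolding log_uniformly_continuous_def by (meson less_imp_le)
  define \<delta> where "\<delta> = min \<delta>0 (min \<epsilon> 1)"
  have \<delta>: "\<delta> > 0" "\<delta> \<le> 1" "\<delta> \<le> \<epsilon>" and "\<delta> \<le> \<delta>0"
    using \<open>\<delta>0 > 0\<close> \<open>\<epsilon> > 0\<close> by (simp_all add: \<delta>_def)
  have "B * (\<epsilon> * (1 + 2 * H)) / \<eta> \<le> (B + 1) * (1 + 2 * H) * \<epsilon> / \<eta>"
    using \<open>\<epsilon> > 0\<close> \<open>H \<ge> 0\<close> eta_pos by (intro divide_right_mono) (simp_all add: algebra_simps)
  also have "\<dots> = e"
    using eta_pos bound_nonneg \<open>H \<ge> 0\<close> by (simp add: \<epsilon>_def)
  finally have "B * (\<epsilon> * (1 + 2 * H)) / \<eta> \<le> e" .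
  define C where "C = M * (2 * H / \<delta>\<^sup>2 + 2 * H) / \<eta>"
  have "\<forall>\<^sub>F w in at_top. dist (omega_norm (\<lambda>x. MG K w f x - f x)) 0 \<le> e + C / w\<^sup>2"
    using eventually_gt_at_top[of 0]
  proof eventually_elim
    case (elim w)
    have "omega_bar x * \<bar>MG K w f x - f x\<bar> \<le> e + C / w\<^sup>2" if "x > 0" for x
    proof -
      have "omega_bar x * \<bar>MG K w f x - f x\<bar>
          \<le> (B * (\<epsilon> * (1 + 2 * H)) + M * (2 * H / \<delta>\<^sup>2 + 2 * H) / w\<^sup>2) / \<eta>"
        using h_near[OF _ that] \<open>\<delta> \<le> \<delta>0\<close>
        by (intro MG_omega_weighted_deviation_bound[OF h_nonneg h_bounded _ that elim \<delta>]) auto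
      also have "\<dots> = B * (\<epsilon> * (1 + 2 * H)) / \<eta> + C / w\<^sup>2"
        by (simp add: C_def add_divide_distrib)
      finally show ?thesis using \<open>B * (\<epsilon> * (1 + 2 * H)) / \<eta> \<le> e\<close> by linarith
    qed
    from omega_norm_le[OF this] show ?case by (simp add: dist_real_def)
  qed
  then show "\<exists>C. \<forall>\<^sub>F w in at_top. dist (omega_norm (\<lambda>x. MG K w f x - f x)) 0 \<le> e + C / w\<^sup>2"
    by blast
qed

end

lemma max_product_kernel_if_moment_finite:
  assumes "is_kernel K" "moment_finite 2 K" "kernel_eta K > 0"
  obtains B M where "max_product_kernel K B M (kernel_eta K)"
proof -
  obtain B where B: "\<And>y. y > 0 \<Longrightarrow> \<bar>K y\<bar> \<le> B"
    using assms(1) unfolding is_kernel_def by auto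
  obtain M where M: "\<And>u k. u > 0 \<Longrightarrow> \<bar>K (exp (- real_of_int k) * u)\<bar> * \<bar>real_of_int k - ln u\<bar> powr 2 \<le> M"
    using assms(2) unfolding moment_finite_def by auto
  have "bdd_below (K ` {1..exp 1})"
  proof (rule bdd_belowI[of _ "-B"], clarify)
    show "- B \<le> K y" if "y \<in> {1..exp 1}" for y
      using B[of y] that by (simp add: abs_le_iff)
  qed
  then have "kernel_eta K \<le> K y" if "y \<in> {1..exp 1}" for y
    unfolding kernel_eta_def using that by (intro cInf_lower) auto
  with B M assms(3) have "max_product_kernel K B M (kernel_eta K)"
    by unfold_locales (auto simp: powr_numeral)
  then show ?thesis using that by blast
qed

theorem theorem3p3:
  fixes K :: "real \<Rightarrow> real"
  assumes "is_kernel K"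
    and "moment_finite 2 K"
    and "kernel_eta K > 0"
  shows "(\<forall>f::real \<Rightarrow> real. (\<forall>x>0. f x > 0) \<and> (\<exists>B. \<forall>x>0. \<bar>f x\<bar> \<le> B) \<longrightarrow>
            (\<forall>x>0. log_continuous_at f x \<longrightarrow> ((\<lambda>w. MG K w f x) \<longlongrightarrow> f x) at_top))
      \<and> (\<forall>f\<in>UB_omega_plus. ((\<lambda>w. omega_norm (\<lambda>x. MG K w f x - f x)) \<longlongrightarrow> 0) at_top)"
proof -
  obtain B M where kernel: "max_product_kernel K B M (kernel_eta K)"
    using max_product_kernel_if_moment_finite[OF assms] .
  show ?thesis
  proof (intro conjI allI impI ballI)
    fix f :: "real \<Rightarrow> real" and x :: real
    assume f: "(\<forall>x>0. f x > 0) \<and> (\<exists>B. \<forall>x>0. \<bar>f x\<bar> \<le> B)" and "x > 0" "log_continuous_at f x"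
    then obtain F where "\<And>y. y > 0 \<Longrightarrow> f y \<le> F" by (auto simp: abs_le_iff)
    with f \<open>x > 0\<close> \<open>log_continuous_at f x\<close> show "((\<lambda>w. MG K w f x) \<longlongrightarrow> f x) at_top"
      by (intro max_product_kernel.MG_tendsto_at_log_continuity_point[OF kernel]) (auto simp: less_imp_le)
  next
    fix f assume "f \<in> UB_omega_plus"
    then show "((\<lambda>w. omega_norm (\<lambda>x. MG K w f x - f x)) \<longlongrightarrow> 0) at_top"
      by (rule max_product_kernel.MG_omega_norm_tendsto[OF kernel])
  qed
qed

end
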